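(* Let $d\ge2$, $p_c(z)=\bar z^d+c$, let $W$ be a hyperbolic component of odd period $k$ and let $c_0\in\partial W$ be a parameter for which $p_{c_0}$ has a simple parabolic orbit $z_0,\dots,z_{k-1}$. Let $\varphi_{c_0}$ be a local holomorphic coordinate near $z_0$ with $\varphi_{c_0}(z_0)=0$ and $\varphi_{c_0}\circ p_{c_0}^{\circ 2k}\circ\varphi_{c_0}^{-1}(\zeta)=\zeta+\zeta^2h(\zeta)$ with $h(0)=1$. Then for every $\varepsilon>0$ one can choose a neighborhood $V$ of $c_0$ in parameter space and a neighborhood $U$ of $z_0$ in the dynamical plane such that for every $c\in V$ there is a holomorphic coordinate $\varphi_c:U\to\mathbb{C}$ and a number $a_c\in\mathbb{C}$ satisfying $$f_c(\zeta):=\varphi_c\circ p_c^{\circ 2k}\circ\varphi_c^{-1}(\zeta)=\zeta+(\zeta^2-a_c^2)h_c(\zeta)$$ with $h_c$ holomorphic and $|h_c(\zeta)-1|<\varepsilon$ for all $\zeta\in\varphi_c(U)$.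
   Context: A hyperbolic component of period $n$ is a connected component of the set of parameters $c$ for which $p_c$ has an attracting periodic orbit of period $n$. A periodic orbit of odd period $k$ is parabolic if $(p_c^{\circ2k})'=1$ at its points ($p_c^{\circ2k}$ is holomorphic), and simple if $p_c^{\circ2k}(z_0+w)=z_0+w+aw^2+O(w^3)$ with $a\ne0$. *)

theory Defs
  imports "HOL-Analysis.Analysis" "HOL-Library.Landau_Symbols"
begin

definition tric :: "nat \<Rightarrow> complex \<Rightarrow> complex \<Rightarrow> complex" where
  "tric d c z = cnj z ^ d + c"

definition exact_periodic :: "nat \<Rightarrow> complex \<Rightarrow> nat \<Rightarrow> complex \<Rightarrow> bool" where
  "exact_periodic d c n z \<longleftrightarrow> 0 < n \<and> (tric d c ^^ n) z = z \<and>
     (\<forall>m. 0 < m \<and> m < n \<longrightarrow> (tric d c ^^ m) z \<noteq> z)"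

text \<open>p_c has an attracting periodic orbit of period n (the second iterate of the first
  return map is holomorphic; attracting means its multiplier has modulus < 1).\<close>
definition has_attracting_orbit :: "nat \<Rightarrow> complex \<Rightarrow> nat \<Rightarrow> bool" where
  "has_attracting_orbit d c n \<longleftrightarrow>
     (\<exists>z. exact_periodic d c n z \<and> norm (deriv (tric d c ^^ (2*n)) z) < 1)"

definition hyperbolic_component :: "nat \<Rightarrow> nat \<Rightarrow> complex set \<Rightarrow> bool" where
  "hyperbolic_component d n W \<longleftrightarrow> W \<in> components {c. has_attracting_orbit d c n}"

definition parabolic_orbit :: "nat \<Rightarrow> complex \<Rightarrow> nat \<Rightarrow> complex \<Rightarrow> bool" where
  "parabolic_orbit d c k z0 \<longleftrightarrow> exact_periodic d c k z0 \<and>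
     (\<forall>j<k. deriv (tric d c ^^ (2*k)) ((tric d c ^^ j) z0) = 1)"

definition simple_parabolic_orbit :: "nat \<Rightarrow> complex \<Rightarrow> nat \<Rightarrow> complex \<Rightarrow> bool" where
  "simple_parabolic_orbit d c k z0 \<longleftrightarrow> parabolic_orbit d c k z0 \<and>
     (\<exists>a. a \<noteq> 0 \<and>
        (\<lambda>w. (tric d c ^^ (2*k)) (z0 + w) - z0 - w - a * w^2) \<in> O[at 0](\<lambda>w. w^3))"

end

theory Submission
  imports Defs "HOL-Complex_Analysis.Complex_Analysis"
begin

text \<open>Write p_c^2k(z0 + w) = z0 + w + G_c(w). Simplicity of the parabolic orbit gives
  G_c0(w) = A w^2 + O(w^3) with A \<noteq> 0, and G_c depends continuously on c, so for c near c0 it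
  stays close to A w^2 on a small disc. By Rouch\'e, G_c then has exactly two zeros w1, w2
  (counted with multiplicity) near 0 -- the two fixed points into which the parabolic point
  splits -- so G_c(w) = A (w - w1) (w - w2) K_c(w), and the maximum principle makes K_c uniformly
  close to 1. The affine coordinate \<phi>_c(z) = A (z - z0 - (w1 + w2)/2) turns this into
  \<zeta> + (\<zeta>^2 - a_c^2) h_c(\<zeta>) with a_c = A (w1 - w2)/2.\<close>

lemma entire_factor_at_zero:
  fixes G :: "complex \<Rightarrow> complex"
  assumes "G holomorphic_on UNIV" "G w1 = 0"
  obtains F where "F holomorphic_on UNIV" "\<And>w. G w = (w - w1) * F w" "F w1 = deriv G w1"
proof
  define F where "F = (\<lambda>z. if z = w1 then deriv G w1 else (G z - G w1) / (z - w1))"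
  show "F holomorphic_on UNIV" unfolding F_def by (rule pole_lemma) (use assms in auto)
  show "\<And>w. G w = (w - w1) * F w" using assms(2) by (auto simp: F_def)
  show "F w1 = deriv G w1" by (simp add: F_def)
qed

lemma deriv_eq_0_if_zorder_ge_2:
  fixes G :: "complex \<Rightarrow> complex"
  assumes holo: "G holomorphic_on UNIV" and "G w1 = 0" and "G w0 \<noteq> 0"
    and ord: "zorder G w1 \<ge> 2"
  shows "deriv G w1 = 0"
proof -
  define g where "g = zor_poly G w1"
  define n where "n = nat (zorder G w1)"
  obtain r where r: "r > 0" "g holomorphic_on cball w1 r"
    and eq: "\<And>w. w \<in> cball w1 r \<Longrightarrow> G w = g w * (w - w1) ^ n"
    using zorder_exist_zero[OF holo, of w1] assms(3) unfolding g_def n_def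
    by (metis connected_UNIV open_UNIV UNIV_I)
  have n: "n \<ge> 2" using ord by (simp add: n_def)
  have "(g has_field_derivative deriv g w1) (at w1)"
    using r by (intro holomorphic_derivI[of _ "ball w1 r"]) (auto intro: holomorphic_on_subset)
  then have "((\<lambda>w. g w * (w - w1) ^ n) has_field_derivative 0) (at w1)"
    using n by (auto intro!: derivative_eq_intros simp: zero_power)
  then have "(G has_field_derivative 0) (at w1)"
    by (rule has_field_derivative_transform_within_open[where S="ball w1 r"]) (use r eq in auto)
  then show ?thesis by (rule DERIV_imp_deriv)
qed

text \<open>Rouch\'e's theorem against \<open>a w\<^sup>2\<close>, which has a double zero at the origin.\<close>
lemma sum_zorder_zeros_in_disc_eq_2:
  fixes G :: "complex \<Rightarrow> complex"
  assumes holo: "G holomorphic_on UNIV" and a: "a \<noteq> 0" and rho: "\<rho> > 0"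
    and near: "\<And>w. norm w = \<rho> \<Longrightarrow> norm (G w - a * w^2) < norm a * \<rho>^2"
  shows "finite {p. norm p < \<rho> \<and> G p = 0}" and "(\<Sum>p | norm p < \<rho> \<and> G p = 0. zorder G p) = 2"
proof -
  define Zs where "Zs = {p\<in>ball 0 (2*\<rho>). G p = 0}"
  define A where "A = {p. norm p < \<rho> \<and> G p = 0}"
  have no_zero_on_circle: "G p \<noteq> 0" if "norm p = \<rho>" for p
    using near[OF that] that by (auto simp: norm_mult norm_power)
  have finZ: "finite Zs"
  proof (cases "G constant_on UNIV")
    case True
    then have "G p = G (of_real \<rho>)" for p by (auto simp: constant_on_def)
    then have "Zs = {}" using no_zero_on_circle[of "of_real \<rho>"] rho by (auto simp: Zs_def) metis
    then show ?thesis by simp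
  next
    case False
    then have "finite {z\<in>cball 0 (2*\<rho>). G z = 0}"
      by (intro holomorphic_compact_finite_zeros[OF holo]) auto
    then show ?thesis by (rule finite_subset[rotated]) (auto simp: Zs_def)
  qed
  have AZs: "A = {p\<in>Zs. norm p < \<rho>}" using rho by (auto simp: A_def Zs_def)
  then show "finite A" unfolding A_def using finZ by simp
  have "of_int (\<Sum>p\<in>A. zorder G p) = (\<Sum>p\<in>Zs. if norm p < \<rho> then of_int (zorder G p) else 0)"
    by (simp add: AZs sum.inter_filter[OF finZ, symmetric] of_int_sum)
  also have "\<dots> = (\<Sum>p\<in>Zs. winding_number (circlepath 0 \<rho>) p * zorder G p)"
  proof (rule sum.cong)
    fix p assume p: "p \<in> Zs"
    show "(if norm p < \<rho> then of_int (zorder G p) else 0)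
        = winding_number (circlepath 0 \<rho>) p * zorder G p"
    proof (cases "norm p < \<rho>")
      case False
      moreover have "norm p \<noteq> \<rho>" using no_zero_on_circle[of p] p by (auto simp: Zs_def)
      ultimately have "norm p > \<rho>" by linarith
      then have "winding_number (circlepath 0 \<rho>) p = 0"
        using rho by (intro winding_number_zero_outside[of _ "cball 0 \<rho>"]) auto
      then show ?thesis using False by simp
    qed (simp add: winding_number_circlepath)
  qed simp
  also have "\<dots> = (\<Sum>p\<in>{p\<in>ball 0 (2*\<rho>). a * p^2 = 0}.
                      winding_number (circlepath 0 \<rho>) p * zorder (\<lambda>p. a * p^2) p)"
  proof -
    have "(\<Sum>p\<in>{p\<in>ball 0 (2*\<rho>). a * p^2 + (G p - a * p^2) = 0}.
            winding_number (circlepath 0 \<rho>) p * zorder (\<lambda>p. a * p^2 + (G p - a * p^2)) p)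
        = (\<Sum>p\<in>{p\<in>ball 0 (2*\<rho>). a * p^2 = 0}.
            winding_number (circlepath 0 \<rho>) p * zorder (\<lambda>p. a * p^2) p)"
    proof (rule Rouche_theorem)
      show "finite {p \<in> ball 0 (2 * \<rho>). a * p\<^sup>2 + (G p - a * p\<^sup>2) = 0}"
        using finZ by (simp add: Zs_def)
      show "\<forall>z\<in>path_image (circlepath 0 \<rho>). cmod (G z - a * z\<^sup>2) < cmod (a * z\<^sup>2)"
        using rho near by (auto simp: norm_mult norm_power)
      show "\<forall>z. z \<notin> ball 0 (2 * \<rho>) \<longrightarrow> winding_number (circlepath 0 \<rho>) z = 0"
        using rho by (intro allI impI winding_number_zero_outside[of _ "cball 0 \<rho>"]) auto
    qed (use rho a in \<open>auto intro!: holomorphic_intros holomorphic_on_subset[OF holo]\<close>)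
    then show ?thesis by (simp add: Zs_def)
  qed
  also have "\<dots> = 2"
  proof -
    have "zorder (\<lambda>p. a * p^2) 0 = 2"
      by (rule zorder_eqI[where S=UNIV and g="\<lambda>_. a"]) (use a in auto)
    moreover have "{p\<in>ball 0 (2*\<rho>). a * p^2 = 0} = {0}" using a rho by auto
    ultimately show ?thesis using rho by (simp add: winding_number_circlepath)
  qed
  finally show "(\<Sum>p | norm p < \<rho> \<and> G p = 0. zorder G p) = 2"
    unfolding A_def by (metis of_int_eq_iff of_int_numeral)
qed

lemma entire_factor_two_zeros_near_square:
  fixes G :: "complex \<Rightarrow> complex"
  assumes holo: "G holomorphic_on UNIV" and a: "a \<noteq> 0" and rho: "\<rho> > 0"
    and near: "\<And>w. norm w = \<rho> \<Longrightarrow> norm (G w - a * w^2) < norm a * \<rho>^2"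
  obtains w1 w2 K where "norm w1 < \<rho>" "norm w2 < \<rho>" "K holomorphic_on UNIV"
    "\<And>w. G w = a * (w - w1) * (w - w2) * K w"
proof -
  define A where "A = {p. norm p < \<rho> \<and> G p = 0}"
  have finA: "finite A" and sumA: "(\<Sum>p\<in>A. zorder G p) = 2"
    using sum_zorder_zeros_in_disc_eq_2[OF holo a rho near] by (simp_all add: A_def)
  have G\<rho>: "G (of_real \<rho>) \<noteq> 0"
    using near[of "of_real \<rho>"] rho by (auto simp: norm_mult norm_power)
  have zpos: "zorder G p \<ge> 1" if "p \<in> A" for p
  proof -
    have "\<exists>w\<in>UNIV. G w \<noteq> 0" using G\<rho> by blast
    from zorder_exist_zero[OF holo open_UNIV connected_UNIV UNIV_I this, where z=p]
    show ?thesis using that by (simp add: A_def)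
  qed
  have "int (card A) \<le> 2"
  proof -
    have "int (card A) = (\<Sum>p\<in>A. 1)" by simp
    also have "\<dots> \<le> (\<Sum>p\<in>A. zorder G p)" by (rule sum_mono) (use zpos in auto)
    finally show ?thesis using sumA by simp
  qed
  moreover have "card A \<noteq> 0" using sumA finA by (metis card_0_eq sum.empty zero_neq_numeral)
  ultimately consider "card A = 1" | "card A = 2" by linarith
  then show ?thesis
  proof cases
    case 1
    then obtain w1 where A1: "A = {w1}" by (rule card_1_singletonE)
    then have w1: "norm w1 < \<rho>" "G w1 = 0" and "zorder G w1 = 2"
      using sumA by (auto simp: A_def)
    then have "deriv G w1 = 0" using deriv_eq_0_if_zorder_ge_2[OF holo _ G\<rho>] by simp
    obtain F where F: "F holomorphic_on UNIV" "\<And>w. G w = (w - w1) * F w" "F w1 = 0"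
      using entire_factor_at_zero[OF holo w1(2)] \<open>deriv G w1 = 0\<close> by metis
    obtain K where K: "K holomorphic_on UNIV" "\<And>w. F w = (w - w1) * K w"
      using entire_factor_at_zero[OF F(1) F(3)] by metis
    show ?thesis
    proof (rule that[OF w1(1) w1(1)])
      show "(\<lambda>w. K w / a) holomorphic_on UNIV" using K(1) a by (intro holomorphic_intros)
      show "\<And>w. G w = a * (w - w1) * (w - w1) * (K w / a)" using F(2) K(2) a by simp
    qed
  next
    case 2
    then obtain w1 w2 where A2: "A = {w1, w2}" "w1 \<noteq> w2" by (meson card_2_iff)
    then have w: "norm w1 < \<rho>" "G w1 = 0" "norm w2 < \<rho>" "G w2 = 0" by (auto simp: A_def)
    obtain F where F: "F holomorphic_on UNIV" "\<And>w. G w = (w - w1) * F w"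
      using entire_factor_at_zero[OF holo w(2)] by metis
    have "F w2 = 0" using F(2)[of w2] w(4) A2(2) by simp
    obtain K where K: "K holomorphic_on UNIV" "\<And>w. F w = (w - w2) * K w"
      using entire_factor_at_zero[OF F(1) \<open>F w2 = 0\<close>] by metis
    show ?thesis
    proof (rule that[OF w(1) w(3)])
      show "(\<lambda>w. K w / a) holomorphic_on UNIV" using K(1) a by (intro holomorphic_intros)
      show "\<And>w. G w = a * (w - w1) * (w - w2) * (K w / a)" using F(2) K(2) a by simp
    qed
  qed
qed

lemma factor_near_square_on_disc:
  fixes G :: "complex \<Rightarrow> complex"
  assumes holo: "G holomorphic_on UNIV" and A: "A \<noteq> 0"
    and e: "e \<le> 1" and r: "r > 0" and rho: "\<rho> > 0" "48 * \<rho> \<le> e * r"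
    and inner: "\<And>w. norm w = \<rho> \<Longrightarrow> norm (G w - A * w^2) < norm A * \<rho>^2"
    and outer: "\<And>w. norm w = r \<Longrightarrow> norm (G w - A * w^2) \<le> e * norm A * r^2 / 16"
  obtains w1 w2 K where "K holomorphic_on UNIV" "\<And>w. G w = A * (w - w1) * (w - w2) * K w"
    "\<And>w. norm w < r \<Longrightarrow> norm (K w - 1) \<le> e / 2"
proof -
  obtain w1 w2 K where w12: "norm w1 < \<rho>" "norm w2 < \<rho>" and K: "K holomorphic_on UNIV"
    and GK: "\<And>w. G w = A * (w - w1) * (w - w2) * K w"
    using entire_factor_two_zeros_near_square[OF holo A rho(1) inner] by metis
  have "e * r \<le> 1 * r" using e r by (intro mult_right_mono) auto
  then have "\<rho> \<le> r / 48" using rho by linarith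
  have on_circle: "norm (K w - 1) \<le> e / 2" if w: "norm w = r" for w
  proof -
    have far: "norm (w - w1) \<ge> r / 2" "norm (w - w2) \<ge> r / 2"
      using norm_triangle_ineq2[of w w1] norm_triangle_ineq2[of w w2] w w12 r \<open>\<rho> \<le> r / 48\<close>
      by auto
    have "norm ((w1 + w2) * w - w1 * w2) \<le> norm (w1 + w2) * r + norm w1 * norm w2"
      using norm_triangle_ineq4[of "(w1 + w2) * w" "w1 * w2"] w by (simp add: norm_mult)
    also have "\<dots> \<le> (2 * \<rho>) * r + \<rho> * r"
      using norm_triangle_ineq[of w1 w2] w12 rho r \<open>\<rho> \<le> r / 48\<close>
      by (intro add_mono mult_right_mono mult_mono) auto
    also have "\<dots> \<le> e * r^2 / 16"
    proof -
      have "\<rho> * r \<le> (e * r / 48) * r" using rho r by (intro mult_right_mono) auto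
      then show ?thesis by (simp add: power2_eq_square)
    qed
    finally have small_shift: "norm ((w1 + w2) * w - w1 * w2) \<le> e * r^2 / 16" .
    have "A * (w - w1) * (w - w2) * (K w - 1) = (G w - A * w^2) + A * ((w1 + w2) * w - w1 * w2)"
      by (simp add: GK algebra_simps power2_eq_square)
    then have "norm A * norm (w - w1) * norm (w - w2) * norm (K w - 1)
        \<le> norm (G w - A * w^2) + norm A * norm ((w1 + w2) * w - w1 * w2)"
      by (metis norm_mult norm_triangle_ineq)
    also have "\<dots> \<le> e * norm A * r^2 / 16 + norm A * (e * r^2 / 16)"
      using outer[OF w] small_shift by (intro add_mono mult_left_mono) auto
    finally have upper: "norm A * norm (w - w1) * norm (w - w2) * norm (K w - 1) \<le> norm A * r^2 * (e / 8)"
      by (simp add: algebra_simps)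
    have "(r / 2) * (r / 2) \<le> norm (w - w1) * norm (w - w2)"
      using far r by (intro mult_mono) auto
    then have "norm A * norm (K w - 1) * ((r / 2) * (r / 2))
        \<le> norm A * norm (K w - 1) * (norm (w - w1) * norm (w - w2))"
      by (intro mult_left_mono) auto
    then have "(norm A * r^2) * norm (K w - 1) \<le> (norm A * r^2) * (e / 2)"
      using upper by (simp add: power2_eq_square algebra_simps)
    then show ?thesis using A r by (simp add: mult_le_cancel_left_pos)
  qed
  have "norm (K w - 1) \<le> e / 2" if "norm w < r" for w
  proof (rule maximum_modulus_frontier[of "\<lambda>w. K w - 1" "ball 0 r"])
    show "(\<lambda>w. K w - 1) holomorphic_on interior (ball 0 r)"
      by (intro holomorphic_intros holomorphic_on_subset[OF K]) auto
    show "continuous_on (closure (ball 0 r)) (\<lambda>w. K w - 1)"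
      by (intro continuous_intros continuous_on_subset[OF holomorphic_on_imp_continuous_on[OF K]]) auto
  qed (use on_circle that r in \<open>auto simp: frontier_ball\<close>)
  then show ?thesis using that K GK by metis
qed

lemma normal_form_near_double_fixed_point:
  fixes F :: "complex \<Rightarrow> complex"
  assumes holo: "F holomorphic_on UNIV" and A: "A \<noteq> 0"
    and e: "0 < e" "e \<le> 1" and r: "r > 0" and C: "C \<ge> 0" "32 * C * r \<le> e * norm A"
    and close: "\<And>w. norm w \<le> r \<Longrightarrow>
      norm (F (z0 + w) - z0 - w - A * w^2) < norm A * (e * r / 48)^2 / 4 + C * norm w ^ 3"
  shows "\<exists>\<phi> a hc. \<phi> holomorphic_on ball z0 r \<and> inj_on \<phi> (ball z0 r) \<and>
    hc holomorphic_on \<phi> ` ball z0 r \<and> (\<forall>\<zeta>\<in>\<phi> ` ball z0 r. norm (hc \<zeta> - 1) < e) \<and>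
    (\<forall>z. \<phi> (F z) = \<phi> z + ((\<phi> z)^2 - a^2) * hc (\<phi> z))"
proof -
  define \<rho> where "\<rho> = e * r / 48"
  define G where "G = (\<lambda>w. F (z0 + w) - z0 - w)"
  have rho: "\<rho> > 0" "48 * \<rho> \<le> e * r" "\<rho> \<le> r" using e r by (auto simp: \<rho>_def)
  have "e * norm A \<le> 1 * norm A" using e by (intro mult_right_mono) auto
  then have Cr: "C * r \<le> norm A / 32" using C by linarith
  have "G holomorphic_on UNIV" unfolding G_def
    by (intro holomorphic_intros holomorphic_on_compose[OF _ holomorphic_on_subset[OF holo], unfolded o_def]) auto
  moreover have "norm (G w - A * w^2) < norm A * \<rho>^2" if "norm w = \<rho>" for w
  proof -
    have "C * \<rho> \<le> norm A / 32" using mult_left_mono[OF rho(3) C(1)] Cr by linarith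
    then have "C * \<rho> * \<rho>^2 \<le> norm A / 32 * \<rho>^2" by (rule mult_right_mono) simp
    then have "C * \<rho> ^ 3 \<le> norm A / 32 * \<rho>^2" by (simp add: power2_eq_square power3_eq_cube)
    moreover have "norm (G w - A * w^2) < norm A * \<rho>^2 / 4 + C * \<rho> ^ 3"
      using close[of w, folded \<rho>_def] that rho(3) by (simp add: G_def)
    moreover have "norm A * \<rho>^2 > 0" using A rho by simp
    ultimately show ?thesis by linarith
  qed
  moreover have "norm (G w - A * w^2) \<le> e * norm A * r^2 / 16" if "norm w = r" for w
  proof -
    have "C * r ^ 3 \<le> e * norm A / 32 * r^2"
      using mult_right_mono[OF C(2), of "r^2"] by (simp add: power2_eq_square power3_eq_cube)
    moreover have "norm A * (e * r / 48)^2 / 4 \<le> e * norm A / 32 * r^2"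
    proof -
      have "(e * e) * (norm A * r^2) \<le> (288 * e) * (norm A * r^2)"
        using e by (intro mult_right_mono) auto
      then show ?thesis by (simp add: power2_eq_square field_simps)
    qed
    moreover have "norm (G w - A * w^2) < norm A * (e * r / 48)^2 / 4 + C * r ^ 3"
      using close[of w] that by (simp add: G_def)
    moreover have "e * norm A / 32 * r^2 = e * norm A * r^2 / 32" by simp
    ultimately show ?thesis by linarith
  qed
  ultimately obtain w1 w2 K where K: "K holomorphic_on UNIV"
    and GK: "\<And>w. G w = A * (w - w1) * (w - w2) * K w"
    and K1: "\<And>w. norm w < r \<Longrightarrow> norm (K w - 1) \<le> e / 2"
    using factor_near_square_on_disc[OF _ A e(2) r rho(1,2)] by metis
  define s where "s = (w1 + w2) / 2"
  define \<phi> where "\<phi> = (\<lambda>z. A * (z - z0 - s))"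
  define hc where "hc = (\<lambda>\<zeta>. K (\<zeta> / A + s))"
  have hc_\<phi>: "hc (\<phi> z) = K (z - z0)" for z
    using A by (simp add: hc_def \<phi>_def)
  have "\<phi> holomorphic_on ball z0 r" unfolding \<phi>_def by (intro holomorphic_intros)
  moreover have "inj_on \<phi> (ball z0 r)" using A by (auto simp: inj_on_def \<phi>_def)
  moreover have "hc holomorphic_on \<phi> ` ball z0 r"
    unfolding hc_def using A
    by (intro holomorphic_on_compose[OF _ holomorphic_on_subset[OF K], unfolded o_def] holomorphic_intros) auto
  moreover have "norm (hc \<zeta> - 1) < e" if "\<zeta> \<in> \<phi> ` ball z0 r" for \<zeta>
  proof -
    from that obtain z where z: "z \<in> ball z0 r" "\<zeta> = \<phi> z" by blast
    then have "norm (K (z - z0) - 1) \<le> e / 2" using K1 by (simp add: dist_norm norm_minus_commute)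
    then show ?thesis using z(2) e by (simp add: hc_\<phi>)
  qed
  moreover have "\<phi> (F z) = \<phi> z + ((\<phi> z)^2 - (A * (w1 - w2) / 2)^2) * hc (\<phi> z)" for z
  proof -
    have "\<phi> (F z) = \<phi> z + A * G (z - z0)" by (simp add: G_def \<phi>_def algebra_simps)
    also have "A * G (z - z0) = ((\<phi> z)^2 - (A * (w1 - w2) / 2)^2) * K (z - z0)"
      by (simp add: GK \<phi>_def s_def field_simps power2_eq_square)
    finally show ?thesis unfolding hc_\<phi> .
  qed
  ultimately show ?thesis by blast
qed

lemma holomorphic_on_tric_iterate_even: "(tric d c ^^ (2*k)) holomorphic_on UNIV"
proof -
  have "((\<lambda>z. (z^d + cnj c)^d + c) ^^ n) holomorphic_on UNIV" for n
  proof (induction n)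
    case (Suc n)
    have "((\<lambda>z. (z^d + cnj c)^d + c) \<circ> ((\<lambda>z. (z^d + cnj c)^d + c) ^^ n)) holomorphic_on UNIV"
      by (rule holomorphic_on_compose[OF Suc]) (intro holomorphic_intros)
    then show ?case by (simp only: funpow.simps(2))
  qed (simp add: id_def)
  moreover have "tric d c ^^ 2 = (\<lambda>z. (z^d + cnj c)^d + c)"
    by (rule ext) (simp add: tric_def numeral_2_eq_2)
  then have "tric d c ^^ (2*k) = (\<lambda>z. (z^d + cnj c)^d + c) ^^ k"
    by (simp add: funpow_mult[symmetric])
  ultimately show ?thesis by metis
qed

lemma continuous_on_tric_iterate:
  "continuous_on UNIV (\<lambda>p::complex \<times> complex. (tric d (fst p) ^^ n) (snd p))"
proof (induction n)
  case (Suc n)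
  then show ?case unfolding funpow.simps o_def tric_def by (intro continuous_intros)
qed (simp add: continuous_on_snd)

lemma tric_iterate_uniformly_close:
  assumes "\<eta> > 0"
  obtains \<delta> where "\<delta> > 0"
    "\<And>c z. dist c c0 < \<delta> \<Longrightarrow> z \<in> cball z0 r \<Longrightarrow> norm ((tric d c ^^ n) z - (tric d c0 ^^ n) z) < \<eta>"
proof -
  define S where "S = cball c0 1 \<times> cball z0 r"
  have "uniformly_continuous_on S (\<lambda>p. (tric d (fst p) ^^ n) (snd p))"
    unfolding S_def
    by (rule compact_uniformly_continuous[OF continuous_on_subset[OF continuous_on_tric_iterate]])
       (auto intro: compact_Times)
  then obtain \<delta> where \<delta>: "\<delta> > 0" and uc: "\<And>p p'. p \<in> S \<Longrightarrow> p' \<in> S \<Longrightarrow> dist p' p < \<delta> \<Longrightarrow>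
      dist ((tric d (fst p') ^^ n) (snd p')) ((tric d (fst p) ^^ n) (snd p)) < \<eta>"
    unfolding uniformly_continuous_on_def using assms by metis
  show ?thesis
  proof (rule that[of "min \<delta> 1"])
    fix c z assume "dist c c0 < min \<delta> 1" "z \<in> cball z0 r"
    then show "norm ((tric d c ^^ n) z - (tric d c0 ^^ n) z) < \<eta>"
      using uc[of "(c0, z)" "(c, z)"] by (simp add: S_def dist_Pair_Pair dist_commute dist_norm norm_minus_commute)
  qed (use \<delta> in simp)
qed

lemma simple_parabolic_cubic_bound:
  assumes "simple_parabolic_orbit d c0 k z0"
  obtains A C R where "A \<noteq> 0" "C > 0" "R > 0"
    "\<And>w. norm w < R \<Longrightarrow> norm ((tric d c0 ^^ (2*k)) (z0 + w) - z0 - w - A * w^2) \<le> C * norm w ^ 3"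
proof -
  obtain A where A: "A \<noteq> 0"
    and bigo: "(\<lambda>w. (tric d c0 ^^ (2*k)) (z0 + w) - z0 - w - A * w^2) \<in> O[at 0](\<lambda>w. w^3)"
    using assms unfolding simple_parabolic_orbit_def by blast
  have fixed: "(tric d c0 ^^ (2*k)) z0 = z0"
  proof -
    have "(tric d c0 ^^ k) z0 = z0"
      using assms by (simp add: simple_parabolic_orbit_def parabolic_orbit_def exact_periodic_def)
    then show ?thesis by (simp add: mult_2 funpow_add)
  qed
  obtain C where C: "C > 0" and "eventually (\<lambda>w. norm ((tric d c0 ^^ (2*k)) (z0 + w) - z0 - w - A * w^2)
      \<le> C * norm (w^3)) (at 0)"
    using bigo by (elim landau_o.bigE) auto
  then obtain R where R: "R > 0" and near: "\<And>w. w \<noteq> 0 \<Longrightarrow> dist w 0 < R \<Longrightarrow>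
      norm ((tric d c0 ^^ (2*k)) (z0 + w) - z0 - w - A * w^2) \<le> C * norm (w^3)"
    unfolding eventually_at by blast
  show ?thesis
  proof (rule that[OF A C R])
    fix w :: complex assume "norm w < R"
    then show "norm ((tric d c0 ^^ (2*k)) (z0 + w) - z0 - w - A * w^2) \<le> C * norm w ^ 3"
      using near[of w] fixed by (cases "w = 0") (auto simp: norm_power)
  qed
qed

lemma tric_iterate_uniformly_near_square:
  assumes "simple_parabolic_orbit d c0 k z0"
  obtains A C R where "A \<noteq> 0" "C > 0" "R > 0"
    "\<And>\<eta> r. \<eta> > 0 \<Longrightarrow> r < R \<Longrightarrow> \<exists>\<delta>>0. \<forall>c w. dist c c0 < \<delta> \<and> norm w \<le> r \<longrightarrow>
       norm ((tric d c ^^ (2*k)) (z0 + w) - z0 - w - A * w^2) < \<eta> + C * norm w ^ 3"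
proof -
  obtain A C R where A: "A \<noteq> 0" and C: "C > 0" and R: "R > 0"
    and cubic: "\<And>w. norm w < R \<Longrightarrow>
      norm ((tric d c0 ^^ (2*k)) (z0 + w) - z0 - w - A * w^2) \<le> C * norm w ^ 3"
    using simple_parabolic_cubic_bound[OF assms] by metis
  have "\<exists>\<delta>>0. \<forall>c w. dist c c0 < \<delta> \<and> norm w \<le> r \<longrightarrow>
      norm ((tric d c ^^ (2*k)) (z0 + w) - z0 - w - A * w^2) < \<eta> + C * norm w ^ 3"
    if "\<eta> > 0" "r < R" for \<eta> r
  proof -
    let ?Fc = "\<lambda>c. tric d c ^^ (2*k)"
    obtain \<delta> where \<delta>: "\<delta> > 0" and unif: "\<And>c z. dist c c0 < \<delta> \<Longrightarrow> z \<in> cball z0 r \<Longrightarrow>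
        norm (?Fc c z - ?Fc c0 z) < \<eta>"
      using tric_iterate_uniformly_close[OF \<open>\<eta> > 0\<close>] by blast
    have "norm (?Fc c (z0 + w) - z0 - w - A * w^2) < \<eta> + C * norm w ^ 3"
      if "dist c c0 < \<delta>" "norm w \<le> r" for c w
    proof -
      have "?Fc c (z0 + w) - z0 - w - A * w^2
          = (?Fc c (z0 + w) - ?Fc c0 (z0 + w)) + (?Fc c0 (z0 + w) - z0 - w - A * w^2)" by simp
      then have "norm (?Fc c (z0 + w) - z0 - w - A * w^2)
          \<le> norm (?Fc c (z0 + w) - ?Fc c0 (z0 + w)) + norm (?Fc c0 (z0 + w) - z0 - w - A * w^2)"
        by (metis norm_triangle_ineq)
      moreover have "norm (?Fc c (z0 + w) - ?Fc c0 (z0 + w)) < \<eta>"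
        using unif[of c "z0 + w"] that by (simp add: dist_norm)
      ultimately show ?thesis using cubic[of w] that \<open>r < R\<close> by simp
    qed
    then show ?thesis using \<delta> by blast
  qed
  then show ?thesis using that A C R by blast
qed

theorem proposition4p1:
  fixes d k :: nat and W :: "complex set" and c0 z0 :: complex
    and U0 :: "complex set" and \<phi>0 h :: "complex \<Rightarrow> complex"
  assumes "d \<ge> 2"
    and "odd k"
    and "hyperbolic_component d k W"
    and "c0 \<in> frontier W"
    and "simple_parabolic_orbit d c0 k z0"
    and "open U0" and "z0 \<in> U0"
    and "\<phi>0 holomorphic_on U0" and "inj_on \<phi>0 U0" and "\<phi>0 z0 = 0"
    and "h holomorphic_on \<phi>0 ` U0" and "h 0 = 1"
    and "\<forall>z\<in>U0. (tric d c0 ^^ (2*k)) z \<in> U0 \<longrightarrow>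
           \<phi>0 ((tric d c0 ^^ (2*k)) z) = \<phi>0 z + (\<phi>0 z)^2 * h (\<phi>0 z)"
  shows "\<forall>\<epsilon>>0. \<exists>V U. open V \<and> c0 \<in> V \<and> open U \<and> z0 \<in> U \<and>
           (\<forall>c\<in>V. \<exists>\<phi> a hc.
              \<phi> holomorphic_on U \<and> inj_on \<phi> U \<and>
              hc holomorphic_on \<phi> ` U \<and>
              (\<forall>\<zeta>\<in>\<phi> ` U. norm (hc \<zeta> - 1) < \<epsilon>) \<and>
              (\<forall>z\<in>U. (tric d c ^^ (2*k)) z \<in> U \<longrightarrow>
                 \<phi> ((tric d c ^^ (2*k)) z) = \<phi> z + ((\<phi> z)^2 - a^2) * hc (\<phi> z)))"
proof (intro allI impI)
  fix \<epsilon> :: real assume "\<epsilon> > 0"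
  obtain A C R where A: "A \<noteq> 0" and C: "C > 0" and R: "R > 0"
    and near: "\<And>\<eta> r. \<eta> > 0 \<Longrightarrow> r < R \<Longrightarrow> \<exists>\<delta>>0. \<forall>c w. dist c c0 < \<delta> \<and> norm w \<le> r \<longrightarrow>
       norm ((tric d c ^^ (2*k)) (z0 + w) - z0 - w - A * w^2) < \<eta> + C * norm w ^ 3"
    using tric_iterate_uniformly_near_square[OF assms(5)] by metis
  define e where "e = min \<epsilon> 1"
  define r where "r = min (R / 2) (e * norm A / (32 * C))"
  have e: "0 < e" "e \<le> 1" "e \<le> \<epsilon>" using \<open>\<epsilon> > 0\<close> by (auto simp: e_def)
  have r_le: "r \<le> R / 2" "r \<le> e * norm A / (32 * C)" by (simp_all add: r_def)
  have "32 * C * r \<le> 32 * C * (e * norm A / (32 * C))"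
    using C by (intro mult_left_mono[OF r_le(2)]) simp
  moreover have "0 < r" using R C A e by (simp add: r_def)
  ultimately have r: "0 < r" "r < R" "32 * C * r \<le> e * norm A" using R C r_le by simp_all
  obtain \<delta> where "\<delta> > 0" and close: "\<forall>c w. dist c c0 < \<delta> \<and> norm w \<le> r \<longrightarrow>
      norm ((tric d c ^^ (2*k)) (z0 + w) - z0 - w - A * w^2) < norm A * (e * r / 48)^2 / 4 + C * norm w ^ 3"
    using near[of "norm A * (e * r / 48)^2 / 4" r] A e r by auto
  show "\<exists>V U. open V \<and> c0 \<in> V \<and> open U \<and> z0 \<in> U \<and> (\<forall>c\<in>V. \<exists>\<phi> a hc.
          \<phi> holomorphic_on U \<and> inj_on \<phi> U \<and> hc holomorphic_on \<phi> ` U \<and>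
          (\<forall>\<zeta>\<in>\<phi> ` U. norm (hc \<zeta> - 1) < \<epsilon>) \<and>
          (\<forall>z\<in>U. (tric d c ^^ (2*k)) z \<in> U \<longrightarrow>
             \<phi> ((tric d c ^^ (2*k)) z) = \<phi> z + ((\<phi> z)^2 - a^2) * hc (\<phi> z)))"
  proof (rule exI[of _ "ball c0 \<delta>"], rule exI[of _ "ball z0 r"], intro conjI ballI)
    fix c assume "c \<in> ball c0 \<delta>"
    then have "norm ((tric d c ^^ (2*k)) (z0 + w) - z0 - w - A * w^2)
        < norm A * (e * r / 48)^2 / 4 + C * norm w ^ 3" if "norm w \<le> r" for w
      using close that by (simp add: dist_commute)
    then obtain \<phi> a hc where \<phi>: "\<phi> holomorphic_on ball z0 r" "inj_on \<phi> (ball z0 r)"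
      "hc holomorphic_on \<phi> ` ball z0 r" and hc: "\<forall>\<zeta>\<in>\<phi> ` ball z0 r. norm (hc \<zeta> - 1) < e"
      and conjugacy: "\<forall>z. \<phi> ((tric d c ^^ (2*k)) z) = \<phi> z + ((\<phi> z)^2 - a^2) * hc (\<phi> z)"
      using normal_form_near_double_fixed_point[OF holomorphic_on_tric_iterate_even
          A e(1,2) r(1) less_imp_le[OF C] r(3)] by blast
    have "\<forall>\<zeta>\<in>\<phi> ` ball z0 r. norm (hc \<zeta> - 1) < \<epsilon>" using hc e(3) by force
    with \<phi> conjugacy show "\<exists>\<phi> a hc. \<phi> holomorphic_on ball z0 r \<and> inj_on \<phi> (ball z0 r) \<and>
        hc holomorphic_on \<phi> ` ball z0 r \<and> (\<forall>\<zeta>\<in>\<phi> ` ball z0 r. norm (hc \<zeta> - 1) < \<epsilon>) \<and>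
        (\<forall>z\<in>ball z0 r. (tric d c ^^ (2*k)) z \<in> ball z0 r \<longrightarrow>
           \<phi> ((tric d c ^^ (2*k)) z) = \<phi> z + ((\<phi> z)^2 - a^2) * hc (\<phi> z))"
      by (intro exI[of _ \<phi>] exI[of _ a] exI[of _ hc] conjI) auto
  qed (use \<open>\<delta> > 0\<close> r in auto)
qed

end
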